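(* There exist $\mu_\lambda\in\overline{\mathbb Q}$ $(\lambda\in\Lambda)$ with $\mu_\lambda^3=\lambda$ such that $\sum_{\lambda\in\Lambda}c_\lambda\mu_\lambda=0$. Likewise, there exist $\eta_\lambda\in\overline{\mathbb Q}$ $(\lambda\in\Lambda)$ with $\eta_\lambda^3=\lambda$ such that $\sum_{\lambda\in\Lambda}c_\lambda\eta_\lambda^{-5}=0$.
   Context: $\Lambda=\{\lambda_1,\lambda_2,\lambda_3\}\subset\overline{\mathbb Q}$ is the set of roots of $P(X)=X^3-X^2-X-1$, and $c_\lambda=\lambda P'(\lambda)^{-1}$ for $\lambda\in\Lambda$ (so that the Tribonacci numbers are $T(n)=\sum_{\lambda\in\Lambda}c_\lambda\lambda^n$). *)

theory Defs
  imports "HOL-Computational_Algebra.Polynomial" Complex_Main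
begin

text \<open>Tribonacci characteristic polynomial P(X) = X^3 - X^2 - X - 1 over the complex numbers;
  the algebraic closure of Q is realised as the algebraic complex numbers.\<close>
definition tribP :: "complex poly" where
  "tribP = [:-1, -1, -1, 1:]"

definition Lambda :: "complex set" where
  "Lambda = {z. poly tribP z = 0}"

definition cc :: "complex \<Rightarrow> complex" where
  "cc l = l / poly (pderiv tribP) l"

end

theory Submission
  imports Defs "HOL-Computational_Algebra.Fundamental_Theorem_Algebra"
begin

text \<open>For a root l of P the relation l^3 = l^2 + l + 1 gives (l^2 - l)^3 = 2 l, so
  (l^2 - l) / cbrt 2 is a cube root of l; it serves as both \<open>\<mu>\<close> and \<open>\<eta>\<close>. With this choice
  c_l \<mu>_l and c_l \<mu>_l^-5 become (l + 1) / P'(l) and (l - 1) / P'(l), up to the factor 1 / cbrt 2.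
  The sum of q(l) / P'(l) over the three distinct roots is the second divided difference of q,
  which vanishes for linear q.\<close>

lemma poly_tribP: "poly tribP z = z^3 - z^2 - z - 1"
  by (simp add: tribP_def algebra_simps power2_eq_square power3_eq_cube)

lemma poly_pderiv_tribP: "poly (pderiv tribP) z = 3*z^2 - 2*z - 1"
  by (simp add: tribP_def pderiv_pCons algebra_simps power2_eq_square)

lemma rsquarefree_tribP: "rsquarefree tribP"
  unfolding rsquarefree_roots
proof (intro allI notI)
  fix z :: complex
  assume "poly tribP z = 0 \<and> poly (pderiv tribP) z = 0"
  then have p: "z^3 - z^2 - z - 1 = 0" and d: "3*z^2 - 2*z - 1 = 0"
    by (simp_all add: poly_tribP poly_pderiv_tribP)
  have "z^2 = -2*z - 3" using p d by algebra
  moreover from this have "z = -5/4" using p d by algebra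
  ultimately show False by (simp add: power2_eq_square)
qed

lemma tribP_eq_prod_Lambda: "tribP = (\<Prod>z\<in>Lambda. [:-z, 1:])"
  using complex_poly_decompose_rsquarefree[OF rsquarefree_tribP]
  by (simp add: tribP_def Lambda_def)

lemma card_Lambda: "card Lambda = 3"
proof -
  have "degree tribP = 3" by (simp add: tribP_def)
  then show ?thesis
    by (subst (asm) tribP_eq_prod_Lambda) (simp add: degree_prod_eq_sum_degree)
qed

lemma Lambda_eq:
  obtains a b c where "Lambda = {a, b, c}" "a \<noteq> b" "a \<noteq> c" "b \<noteq> c"
  using card_Lambda by (auto simp: card_3_iff)

lemma second_divided_difference_linear:
  fixes a b c u k :: "'a :: field"
  assumes "a \<noteq> b" "a \<noteq> c" "b \<noteq> c"
  shows "(u*a + k) / ((a-b)*(a-c)) + (u*b + k) / ((b-a)*(b-c)) + (u*c + k) / ((c-a)*(c-b)) = 0"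
proof -
  have "a - b \<noteq> 0" "a - c \<noteq> 0" "b - a \<noteq> 0" "b - c \<noteq> 0" "c - a \<noteq> 0" "c - b \<noteq> 0"
    using assms by auto
  then show ?thesis by (simp add: divide_simps) (simp add: algebra_simps)
qed

lemma tribP_eq_linear_factors:
  assumes "Lambda = {a, b, c}" "a \<noteq> b" "a \<noteq> c" "b \<noteq> c"
  shows "tribP = [:-a, 1:] * [:-b, 1:] * [:-c, 1:]"
proof -
  have "tribP = (\<Prod>z\<in>{a, b, c}. [:-z, 1:])"
    using tribP_eq_prod_Lambda assms(1) by simp
  with assms(2-4) show ?thesis by (simp add: algebra_simps)
qed

lemma sum_Lambda_linear_div_pderiv: "(\<Sum>l\<in>Lambda. (u*l + k) / poly (pderiv tribP) l) = 0"
proof -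
  obtain a b c where abc: "Lambda = {a, b, c}" "a \<noteq> b" "a \<noteq> c" "b \<noteq> c"
    by (rule Lambda_eq)
  have d: "poly (pderiv tribP) z = (z-a)*(z-b) + (z-a)*(z-c) + (z-b)*(z-c)" for z
    unfolding tribP_eq_linear_factors[OF abc]
    by (simp only: pderiv_mult poly_mult poly_add pderiv_pCons pderiv_0 poly_pCons)
      (simp add: algebra_simps)
  have "poly (pderiv tribP) a = (a-b)*(a-c)" "poly (pderiv tribP) b = (b-a)*(b-c)"
    "poly (pderiv tribP) c = (c-a)*(c-b)"
    using d[of a] d[of b] d[of c] by (simp_all add: algebra_simps)
  moreover have "(\<Sum>l\<in>Lambda. (u*l + k) / poly (pderiv tribP) l) =
      (u*a + k) / poly (pderiv tribP) a + (u*b + k) / poly (pderiv tribP) b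
      + (u*c + k) / poly (pderiv tribP) c"
    unfolding abc(1) using abc(2-4) by (simp add: add.assoc)
  ultimately show ?thesis
    using second_divided_difference_linear[OF abc(2-4)] by simp
qed

lemma Lambda_iff: "l \<in> Lambda \<longleftrightarrow> l^3 = l^2 + l + 1"
  unfolding Lambda_def mem_Collect_eq poly_tribP by (simp add: diff_eq_eq add_ac)

lemma algebraic_Lambda: "l \<in> Lambda \<Longrightarrow> algebraic l"
  by (rule algebraicI[of tribP]) (auto simp: Lambda_def tribP_def coeff_pCons split: nat.split)

lemma algebraic_cube_root:
  fixes x :: "'a :: field_char_0"
  assumes "algebraic (x^3)"
  shows "algebraic x"
  by (rule algebraic_root[OF assms, of "monom 1 3"]) (auto simp: poly_monom degree_monom_eq)

definition cbrt_Lambda :: "complex \<Rightarrow> complex" where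
  "cbrt_Lambda l = (l^2 - l) / of_real (root 3 2)"

lemma Lambda_cube_identity: "l \<in> Lambda \<Longrightarrow> (l^2 - l)^3 = 2*l"
  unfolding Lambda_iff by algebra

lemma cbrt_Lambda_cube: "l \<in> Lambda \<Longrightarrow> cbrt_Lambda l ^ 3 = l"
  by (simp add: cbrt_Lambda_def power_divide Lambda_cube_identity flip: of_real_power)

lemma algebraic_cbrt_Lambda: "l \<in> Lambda \<Longrightarrow> algebraic (cbrt_Lambda l)"
  by (rule algebraic_cube_root) (simp add: cbrt_Lambda_cube algebraic_Lambda)

lemma cc_mult_cbrt_Lambda:
  "l \<in> Lambda \<Longrightarrow> cc l * cbrt_Lambda l = (l + 1) / poly (pderiv tribP) l / of_real (root 3 2)"
proof -
  assume "l \<in> Lambda"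
  then have "l * (l^2 - l) = l + 1"
    by (simp add: Lambda_iff algebra_simps power2_eq_square power3_eq_cube)
  then show ?thesis by (simp add: cc_def cbrt_Lambda_def)
qed

lemma cc_mult_inverse_cbrt_Lambda_pow5:
  "l \<in> Lambda \<Longrightarrow>
    cc l * inverse (cbrt_Lambda l ^ 5) = (l - 1) / poly (pderiv tribP) l / of_real (root 3 2)"
proof -
  assume l: "l \<in> Lambda"
  then have "l \<noteq> 0" by (auto simp: Lambda_iff)
  have "cbrt_Lambda l \<noteq> 0"
    using cbrt_Lambda_cube[OF l] \<open>l \<noteq> 0\<close> by auto
  then have "inverse (cbrt_Lambda l ^ 5) = cbrt_Lambda l / cbrt_Lambda l ^ 6"
    by (simp add: field_simps eval_nat_numeral)
  also have "cbrt_Lambda l ^ 6 = l^2"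
    using power_mult[of "cbrt_Lambda l" 3 2] by (simp add: cbrt_Lambda_cube[OF l])
  finally have "inverse (cbrt_Lambda l ^ 5) = cbrt_Lambda l / l^2" .
  then have "cc l * inverse (cbrt_Lambda l ^ 5) = cc l * cbrt_Lambda l / l^2"
    by simp
  also have "\<dots> = (l + 1) / l^2 / poly (pderiv tribP) l / of_real (root 3 2)"
    by (simp add: cc_mult_cbrt_Lambda[OF l] divide_divide_eq_left mult_ac)
  also have "(l + 1) / l^2 = l - 1"
    using l \<open>l \<noteq> 0\<close> by (simp add: Lambda_iff field_simps power2_eq_square power3_eq_cube)
  finally show ?thesis .
qed

theorem mainTheorem5:
  shows "(\<exists>\<mu> :: complex \<Rightarrow> complex.
            (\<forall>l\<in>Lambda. algebraic (\<mu> l) \<and> (\<mu> l) ^ 3 = l) \<and>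
            (\<Sum>l\<in>Lambda. cc l * \<mu> l) = 0)
       \<and> (\<exists>\<eta> :: complex \<Rightarrow> complex.
            (\<forall>l\<in>Lambda. algebraic (\<eta> l) \<and> (\<eta> l) ^ 3 = l) \<and>
            (\<Sum>l\<in>Lambda. cc l * inverse ((\<eta> l) ^ 5)) = 0)"
proof -
  have "(\<Sum>l\<in>Lambda. cc l * cbrt_Lambda l)
      = (\<Sum>l\<in>Lambda. (1*l + 1) / poly (pderiv tribP) l) / of_real (root 3 2)"
    by (simp add: sum_divide_distrib cc_mult_cbrt_Lambda)
  also have "\<dots> = 0" by (simp only: sum_Lambda_linear_div_pderiv) simp
  finally have sum_mu: "(\<Sum>l\<in>Lambda. cc l * cbrt_Lambda l) = 0" .
  have "(\<Sum>l\<in>Lambda. cc l * inverse (cbrt_Lambda l ^ 5))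
      = (\<Sum>l\<in>Lambda. (1*l + -1) / poly (pderiv tribP) l) / of_real (root 3 2)"
    by (simp add: sum_divide_distrib cc_mult_inverse_cbrt_Lambda_pow5)
  also have "\<dots> = 0" by (simp only: sum_Lambda_linear_div_pderiv) simp
  finally have sum_eta: "(\<Sum>l\<in>Lambda. cc l * inverse (cbrt_Lambda l ^ 5)) = 0" .
  show ?thesis
    using sum_mu sum_eta algebraic_cbrt_Lambda cbrt_Lambda_cube by blast
qed

end
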